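(* Let $k\ge 0$ be an integer and let $f_k(x)\in\mathbb{Q}[x]$ be a monic polynomial of degree $k+1$ such that for all integers $g>3k$, \[\#\{S\in\mathcal{S}_g\mid m(S)=g-k\}=\frac{1}{(k+1)!}f_k(g).\] Then $f_k(x)$ has integer coefficients.
   Context: A numerical semigroup $S$ is a submonoid of $\mathbb{N}_0$ with finite complement; its genus is the size of the complement and $m(S)$ its smallest nonzero element. $\mathcal{S}_g$ is the set of numerical semigroups of genus $g$. (It is known that for each $k\ge0$ such a monic polynomial $f_k$ of degree $k+1$ exists.) *)

theory Defs
  imports Main "HOL-Computational_Algebra.Polynomial"
begin

definition numerical_semigroup :: "nat set \<Rightarrow> bool" where
  "numerical_semigroup S \<longleftrightarrow> 0 \<in> S \<and> (\<forall>a\<in>S. \<forall>b\<in>S. a + b \<in> S) \<and> finite (UNIV - S)"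

definition genus :: "nat set \<Rightarrow> nat" where
  "genus S = card (UNIV - S)"

definition multiplicity_ns :: "nat set \<Rightarrow> nat" where
  "multiplicity_ns S = (LEAST x. x \<in> S \<and> 0 < x)"

definition semigroups_of_genus :: "nat \<Rightarrow> nat set set" where
  "semigroups_of_genus g = {S. numerical_semigroup S \<and> genus S = g}"

end

theory Submission
  imports Defs
begin

text \<open>
  By hypothesis \<open>h = f / (k+1)!\<close> is a polynomial of degree \<open>k+1\<close> taking integer values at
  all integers \<open>g > 3k\<close>. Expanding a polynomial \<open>p\<close> of degree \<open>\<le> n\<close> in the basis
  \<open>j! binom(x - N, j)\<close>, \<open>j \<le> n\<close>, of shifted falling factorials, the values at
  \<open>N, N+1, \<dots>, N+n\<close> determine the coefficients triangularly, and integrality of these values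
  forces the coefficient of \<open>j! binom(x - N, j)\<close> to lie in \<open>\<int>/j!\<close>. Hence \<open>n! p\<close> has integer
  coefficients; with \<open>p = h\<close> and \<open>n = k+1\<close> this says \<open>f\<close> does.
\<close>

definition int_coeffs :: "'a::ring_1 poly \<Rightarrow> bool" where
  "int_coeffs p \<longleftrightarrow> (\<forall>i. coeff p i \<in> \<int>)"

lemma int_coeffs_add: "int_coeffs p \<Longrightarrow> int_coeffs q \<Longrightarrow> int_coeffs (p + q)"
  by (simp add: int_coeffs_def Ints_add)

lemma int_coeffs_smult: "c \<in> \<int> \<Longrightarrow> int_coeffs p \<Longrightarrow> int_coeffs (smult c p)"
  by (simp add: int_coeffs_def Ints_mult)

lemma int_coeffs_mult: "int_coeffs p \<Longrightarrow> int_coeffs q \<Longrightarrow> int_coeffs (p * q)"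
  by (auto simp: int_coeffs_def coeff_mult intro!: Ints_sum Ints_mult)

lemma int_coeffs_1: "int_coeffs 1"
  by (simp add: int_coeffs_def coeff_1)

lemma int_coeffs_prod: "(\<And>i. i \<in> A \<Longrightarrow> int_coeffs (p i)) \<Longrightarrow> int_coeffs (prod p A)"
  by (induction A rule: infinite_finite_induct) (simp_all add: int_coeffs_1 int_coeffs_mult)

lemma int_coeffs_monic_linear: "c \<in> \<int> \<Longrightarrow> int_coeffs [:c, 1:]"
  by (auto simp: int_coeffs_def coeff_pCons split: nat.split)

definition shifted_falling_poly :: "nat \<Rightarrow> nat \<Rightarrow> 'a::comm_ring_1 poly" where
  "shifted_falling_poly N k = (\<Prod>i<k. [:- of_nat (N + i), 1:])"

lemma degree_shifted_falling_poly: "degree (shifted_falling_poly N k :: 'a::idom poly) = k"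
  by (simp add: shifted_falling_poly_def degree_prod_sum_eq)

lemma lead_coeff_shifted_falling_poly:
  "lead_coeff (shifted_falling_poly N k :: 'a::idom poly) = 1"
  by (simp add: shifted_falling_poly_def lead_coeff_prod)

lemma int_coeffs_shifted_falling_poly: "int_coeffs (shifted_falling_poly N k)"
  unfolding shifted_falling_poly_def
  by (intro int_coeffs_prod int_coeffs_monic_linear) simp

lemma poly_shifted_falling_poly:
  "poly (shifted_falling_poly N k) x = fact k * ((x - of_nat N) gchoose k)"
  for x :: "'a::field_char_0"
  by (simp add: shifted_falling_poly_def poly_prod gbinomial_mult_fact atLeast0LessThan
      algebra_simps)

lemma poly_shifted_falling_poly_of_nat:
  "poly (shifted_falling_poly N k) (of_nat (N + M)) = (fact k * of_nat (M choose k) :: 'a::field_char_0)"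
  by (simp add: poly_shifted_falling_poly binomial_gbinomial)

lemma degree_minus_smult_monic_le:
  fixes p q :: "'a::comm_ring_1 poly"
  assumes "degree p \<le> Suc n" and "degree q = Suc n" and "lead_coeff q = 1"
  shows "degree (p - smult (coeff p (Suc n)) q) \<le> n"
proof (rule degree_le, intro allI impI)
  fix i assume "n < i"
  then consider "i = Suc n" | "Suc n < i" by linarith
  then show "coeff (p - smult (coeff p (Suc n)) q) i = 0"
    by cases (use assms in \<open>auto simp: coeff_eq_0\<close>)
qed

lemma int_coeffs_fact_smult_if_int_valued:
  fixes p :: "'a::field_char_0 poly"
  assumes "degree p \<le> n" and "\<And>i. i \<le> n \<Longrightarrow> poly p (of_nat (N + i)) \<in> \<int>"
  shows "int_coeffs (smult (fact n) p) \<and> (\<forall>M. poly p (of_nat (N + M)) \<in> \<int>)"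
  using assms
proof (induction n arbitrary: p)
  case 0
  then obtain c where p: "p = [:c:]"
    by (meson degree0_coeffs le_zero_eq)
  with "0.prems"(2)[of 0] have "c \<in> \<int>"
    by simp
  with p show ?case
    by (simp add: int_coeffs_def coeff_pCons split: nat.split)
next
  case (Suc n)
  define q :: "'a poly" where "q = shifted_falling_poly N (Suc n)"
  define r where "r = p - smult (coeff p (Suc n)) q"
  define b where "b = fact (Suc n) * coeff p (Suc n)"
  have p_split: "poly p (of_nat (N + M)) = poly r (of_nat (N + M)) + b * of_nat (M choose Suc n)"
    for M
  proof -
    have "poly q (of_nat (N + M)) = fact (Suc n) * of_nat (M choose Suc n)"
      by (simp only: q_def poly_shifted_falling_poly_of_nat)
    then show ?thesis
      by (simp add: r_def b_def)
  qed
  have "degree r \<le> n"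
    unfolding r_def q_def using Suc.prems(1)
    by (intro degree_minus_smult_monic_le degree_shifted_falling_poly lead_coeff_shifted_falling_poly)
  moreover have "poly r (of_nat (N + i)) \<in> \<int>" if "i \<le> n" for i
    using p_split[of i] Suc.prems(2)[of i] that by (simp add: binomial_eq_0)
  ultimately have r_coeffs: "int_coeffs (smult (fact n) r)"
    and r_values: "\<And>M. poly r (of_nat (N + M)) \<in> \<int>"
    using Suc.IH by blast+
  \<comment> \<open>\<open>r\<close> agrees with \<open>p\<close> only up to \<open>N + n\<close>; its integrality at \<open>N + Suc n\<close> is why the
    induction carries integrality at all points \<open>\<ge> N\<close>.\<close>
  have "b = poly p (of_nat (N + Suc n)) - poly r (of_nat (N + Suc n))"
    using p_split[of "Suc n"] by simp
  then have b_int: "b \<in> \<int>"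
    using Suc.prems(2)[of "Suc n"] r_values[of "Suc n"] by (simp only: Ints_diff order.refl)
  have "smult (fact (Suc n)) p = smult (of_nat (Suc n)) (smult (fact n) r) + smult b q"
    by (simp add: r_def b_def smult_diff_right mult.assoc)
  moreover have "int_coeffs (smult (of_nat (Suc n)) (smult (fact n) r) + smult b q)"
    unfolding q_def
    by (intro int_coeffs_add int_coeffs_smult r_coeffs b_int int_coeffs_shifted_falling_poly) simp
  moreover have "poly p (of_nat (N + M)) \<in> \<int>" for M
    unfolding p_split by (intro Ints_add Ints_mult r_values b_int) simp
  ultimately show ?case by simp
qed

theorem corollary1p11:
  fixes k :: nat and f :: "rat poly"
  assumes monic: "lead_coeff f = 1"
    and deg: "degree f = k + 1"
    and count: "\<And>g::nat. g > 3 * k \<Longrightarrow>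
       of_nat (card {S \<in> semigroups_of_genus g. multiplicity_ns S = g - k})
         = poly f (of_nat g) / fact (k + 1)"
  shows "\<forall>i. coeff f i \<in> \<int>"
proof -
  define h where "h = smult (inverse (fact (k + 1))) f"
  have "degree h \<le> k + 1"
    using deg by (simp add: h_def)
  moreover have "poly h (of_nat (Suc (3 * k) + i)) \<in> \<int>" for i
  proof -
    let ?g = "Suc (3 * k) + i"
    have "poly h (of_nat ?g) = of_nat (card {S \<in> semigroups_of_genus ?g. multiplicity_ns S = ?g - k})"
      using count[of ?g] by (simp add: h_def divide_inverse mult.commute)
    then show ?thesis
      by (metis Ints_of_nat)
  qed
  ultimately have "int_coeffs (smult (fact (k + 1)) h)"
    using int_coeffs_fact_smult_if_int_valued by blast
  moreover have "smult (fact (k + 1)) h = f"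
    by (simp add: h_def del: fact_Suc)
  ultimately show ?thesis
    by (metis int_coeffs_def)
qed

end
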